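(* Let $\kappa$ be a regular uncountable cardinal with $\kappa^{<\kappa}=\kappa$ and $\gamma^\omega<\kappa$ for all $\gamma<\kappa$, and suppose $\kappa=\lambda^+$. Then the linear order $I^0$ is $(<\kappa,bs)$-stable.
   Context: Order $\kappa\times\mathbb Q$ lexicographically; $I^0$ is the set of $f:\omega\to\kappa\times\mathbb Q$, $f(n)=(f_1(n),f_2(n))$, with $\{n<\omega\mid f_1(n)\ne0\}$ finite, ordered by $f<g$ iff $f(n)<g(n)$ for the least $n$ with $f(n)\ne g(n)$. For a linear order $A$, $B\subseteq A$ and $a\in A$, $tp_{bs}(a,B,A)$ is the set of atomic and negated atomic formulas (in the language $\{<\}$) with parameters from $B$ satisfied by $a$. $A$ is $(<\kappa,bs)$-stable if for every $B\subseteq A$ with $|B|<\kappa$, $|\{tp_{bs}(a,B,A)\mid a\in A\}|<\kappa$. *)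

theory Defs
  imports Main "HOL-Library.Countable_Set"
begin

unbundle cardinal_syntax

text \<open>Terms of the language {<} with one free variable (Var) and parameters (Par b).\<close>
datatype 'a bterm = Var | Par 'a
datatype 'a batom = Lt "'a bterm" "'a bterm" | Eq "'a bterm" "'a bterm"
datatype 'a blit = Pos "'a batom" | Neg "'a batom"

fun bterm_params :: "'a bterm \<Rightarrow> 'a set" where
  "bterm_params Var = {}" | "bterm_params (Par b) = {b}"

fun batom_params :: "'a batom \<Rightarrow> 'a set" where
  "batom_params (Lt s t) = bterm_params s \<union> bterm_params t"
| "batom_params (Eq s t) = bterm_params s \<union> bterm_params t"

fun blit_params :: "'a blit \<Rightarrow> 'a set" where
  "blit_params (Pos p) = batom_params p" | "blit_params (Neg p) = batom_params p"

fun bterm_eval :: "'a \<Rightarrow> 'a bterm \<Rightarrow> 'a" where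
  "bterm_eval a Var = a" | "bterm_eval a (Par b) = b"

fun batom_holds :: "('a \<Rightarrow> 'a \<Rightarrow> bool) \<Rightarrow> 'a \<Rightarrow> 'a batom \<Rightarrow> bool" where
  "batom_holds lt a (Lt s t) = lt (bterm_eval a s) (bterm_eval a t)"
| "batom_holds lt a (Eq s t) = (bterm_eval a s = bterm_eval a t)"

fun blit_holds :: "('a \<Rightarrow> 'a \<Rightarrow> bool) \<Rightarrow> 'a \<Rightarrow> 'a blit \<Rightarrow> bool" where
  "blit_holds lt a (Pos p) = batom_holds lt a p"
| "blit_holds lt a (Neg p) = (\<not> batom_holds lt a p)"

text \<open>tp_bs(a,B,A): the linear order A is given by its carrier and strict order lt.\<close>
definition tp_bs :: "('a \<Rightarrow> 'a \<Rightarrow> bool) \<Rightarrow> 'a \<Rightarrow> 'a set \<Rightarrow> 'a blit set" where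
  "tp_bs lt a B = {\<phi>. blit_params \<phi> \<subseteq> B \<and> blit_holds lt a \<phi>}"

text \<open>(<kappa,bs)-stability, kappa a cardinal given as a (cardinal) well-order relation.\<close>
definition lt_bs_stable :: "'k rel \<Rightarrow> 'a set \<Rightarrow> ('a \<Rightarrow> 'a \<Rightarrow> bool) \<Rightarrow> bool" where
  "lt_bs_stable kappa A lt \<longleftrightarrow>
     (\<forall>B. B \<subseteq> A \<and> |B| <o kappa \<longrightarrow> |{tp_bs lt a B | a. a \<in> A}| <o kappa)"

definition rless :: "'k rel \<Rightarrow> 'k \<Rightarrow> 'k \<Rightarrow> bool" where
  "rless r a b \<longleftrightarrow> (a, b) \<in> r \<and> a \<noteq> b"

definition rzero :: "'k rel \<Rightarrow> 'k" where
  "rzero r = (THE x. x \<in> Field r \<and> (\<forall>y \<in> Field r. (x, y) \<in> r))"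

definition lexless :: "'k rel \<Rightarrow> 'k \<times> rat \<Rightarrow> 'k \<times> rat \<Rightarrow> bool" where
  "lexless r p q \<longleftrightarrow> rless r (fst p) (fst q) \<or> (fst p = fst q \<and> snd p < snd q)"

definition I0 :: "'k rel \<Rightarrow> (nat \<Rightarrow> 'k \<times> rat) set" where
  "I0 r = {f. (\<forall>n. fst (f n) \<in> Field r) \<and> finite {n. fst (f n) \<noteq> rzero r}}"

definition I0less :: "'k rel \<Rightarrow> (nat \<Rightarrow> 'k \<times> rat) \<Rightarrow> (nat \<Rightarrow> 'k \<times> rat) \<Rightarrow> bool" where
  "I0less r f g \<longleftrightarrow> f \<noteq> g \<and> lexless r (f (LEAST n. f n \<noteq> g n)) (g (LEAST n. f n \<noteq> g n))"

end

theory Submission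
  imports Defs
begin

text \<open>Fix \<open>B\<close> with \<open>|B| < \<kappa>\<close> and let \<open>V\<close> be the set of values \<open>b n\<close> of members \<open>b \<in> B\<close>,
  so \<open>|V| < \<kappa>\<close>. If every finite prefix of \<open>a\<close> is a prefix of some member of \<open>B\<close>, then \<open>a\<close> is an
  \<open>\<omega>\<close>-sequence in \<open>V\<close>, and there are at most \<open>|V|\<^sup>\<omega> < \<kappa>\<close> of these. Otherwise let \<open>k\<close> be least
  such that \<open>a\<close> restricted to \<open>k + 1\<close> is no prefix of a member of \<open>B\<close>. Then \<open>a\<close> first differs
  from each \<open>b \<in> B\<close> at an index \<open>\<le> k\<close>, so its type over \<open>B\<close> only depends on its restriction
  to \<open>k\<close> and on the position of \<open>a k\<close> relative to \<open>V\<close>. Since \<open>\<kappa>\<close> is well ordered, that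
  position is determined by \<open>a k\<close> itself if its first coordinate occurs in \<open>V\<close>, and otherwise
  by the least first coordinate of a member of \<open>V\<close> above it. Hence fewer than \<open>\<kappa>\<close> types
  are realised.\<close>

lemma finite_ordLess_infinite_Card_order:
  assumes "Card_order r" and "\<not> finite (Field r)" and "finite A"
  shows "|A| <o r"
  using finite_ordLess_infinite[OF card_of_Well_order card_order_on_well_order_on[OF assms(1)]]
    assms(2,3) by (simp add: Field_card_of)

lemma card_of_image_ordLess: "|A| <o r \<Longrightarrow> |f ` A| <o r"
  using card_of_image ordLeq_ordLess_trans by blast

lemma card_of_subset_ordLess: "|A| <o r \<Longrightarrow> B \<subseteq> A \<Longrightarrow> |B| <o r"
  using card_of_mono1 ordLeq_ordLess_trans by blast

lemma card_of_Times_ordLess_infinite_Field: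
  assumes r: "Card_order r" "\<not> finite (Field r)" and "|A| <o r" and "|B| <o r"
  shows "|A \<times> B| <o r"
proof -
  let ?C = "A <+> B"
  have C: "|?C| <o r" using card_of_Plus_ordLess_infinite_Field r assms(3,4) by blast
  have "|A \<times> B| \<le>o |?C \<times> ?C|"
    by (rule card_of_ordLeqI[of "map_prod Inl Inr"]) (auto simp: inj_on_def)
  moreover have "|?C \<times> ?C| <o r"
  proof (cases "finite ?C")
    case True
    then show ?thesis by (simp add: finite_ordLess_infinite_Card_order[OF r])
  next
    case False
    then show ?thesis using card_of_Times_same_infinite C ordIso_ordLess_trans by blast
  qed
  ultimately show ?thesis using ordLeq_ordLess_trans by blast
qed

lemma countable_card_of_ordLess:
  assumes "countable A" and "natLeq <o r"
  shows "|A| <o r"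
proof -
  obtain f :: "_ \<Rightarrow> nat" where "inj_on f A" using assms(1) unfolding countable_def by blast
  then have "|A| \<le>o |UNIV :: nat set|" by (rule card_of_ordLeqI) simp
  then show ?thesis using card_of_nat assms(2) ordLeq_ordIso_trans ordLeq_ordLess_trans by blast
qed

lemma card_of_sequences_ordLess:
  fixes r :: "'k rel" and V :: "'b set"
  assumes r: "Card_order r" "Field r = UNIV"
    and omega_power: "\<forall>A :: 'k set. |A| <o r \<longrightarrow> |Func (UNIV :: nat set) A| <o r"
    and V: "|V| <o r"
  shows "|{f :: nat \<Rightarrow> 'b. \<forall>n. f n \<in> V}| <o r"
proof -
  have "|V| \<le>o |UNIV :: 'k set|"
    using ordLess_ordIso_trans[OF V ordIso_symmetric[OF card_of_Field_ordIso[OF r(1)]]] r(2)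
    by (simp add: ordLess_imp_ordLeq)
  then obtain g :: "'b \<Rightarrow> 'k" where g: "inj_on g V" using card_of_ordLeq[of V "UNIV :: 'k set"] by blast
  have "|Func (UNIV :: nat set) (g ` V)| <o r" using omega_power card_of_image_ordLess[OF V] by blast
  moreover have "|{f :: nat \<Rightarrow> 'b. \<forall>n. f n \<in> V}| \<le>o |Func (UNIV :: nat set) (g ` V)|"
  proof (rule card_of_ordLeqI)
    show "inj_on ((\<circ>) g) {f :: nat \<Rightarrow> 'b. \<forall>n. f n \<in> V}"
      using g unfolding inj_on_def by (auto simp: fun_eq_iff)
  qed (auto simp: Func_def)
  ultimately show ?thesis using ordLeq_ordLess_trans by blast
qed

lemma card_of_image_ordLeq_factor:
  assumes "\<And>a a'. a \<in> A \<Longrightarrow> a' \<in> A \<Longrightarrow> F a = F a' \<Longrightarrow> g a = g a'"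
  shows "|g ` A| \<le>o |F ` A|"
proof -
  define h where "h c = g (SOME a. a \<in> A \<and> F a = c)" for c
  have h: "h (F a) = g a" if "a \<in> A" for a
  proof -
    have "(SOME a'. a' \<in> A \<and> F a' = F a) \<in> A \<and> F (SOME a'. a' \<in> A \<and> F a' = F a) = F a"
      by (rule someI[of _ a]) (simp add: that)
    then show ?thesis using assms that unfolding h_def by blast
  qed
  have "g ` A = h ` F ` A" by (simp add: image_image h cong: image_cong)
  then show ?thesis using card_of_image[of h "F ` A"] by simp
qed

lemma tp_bs_eqI:
  assumes "\<And>b. b \<in> B \<Longrightarrow> lt a b = lt a' b \<and> lt b a = lt b a' \<and> (a = b \<longleftrightarrow> a' = b)"
    and "lt a a = lt a' a'"
  shows "tp_bs lt a B = tp_bs lt a' B"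
proof -
  have atom: "batom_holds lt a p = batom_holds lt a' p" if "batom_params p \<subseteq> B" for p
  proof (cases p)
    case (Lt s t) then show ?thesis using that assms by (cases s; cases t) auto
  next
    case (Eq s t) then show ?thesis using that assms by (cases s; cases t) auto
  qed
  have "blit_holds lt a \<phi> = blit_holds lt a' \<phi>" if "blit_params \<phi> \<subseteq> B" for \<phi>
    using that atom by (cases \<phi>) auto
  then show ?thesis unfolding tp_bs_def by blast
qed

lemma rless_iff_not_rless:
  assumes "Well_order r" and "Field r = UNIV" and "x \<noteq> y"
  shows "rless r x y \<longleftrightarrow> \<not> rless r y x"
  using assms wo_rel.TOTALS[of r] wo_rel.ANTISYM[of r]
  unfolding wo_rel_def rless_def antisym_def by blast

definition next_above :: "'k rel \<Rightarrow> 'k set \<Rightarrow> 'k \<Rightarrow> 'k option" where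
  "next_above r S \<alpha> =
     (if \<exists>\<gamma>\<in>S. rless r \<alpha> \<gamma> then Some (wo_rel.minim r {\<gamma>\<in>S. rless r \<alpha> \<gamma>}) else None)"

lemma next_above_in:
  assumes "Well_order r"
  shows "next_above r S \<alpha> \<in> insert None (Some ` S)"
proof -
  have "{\<gamma>\<in>S. rless r \<alpha> \<gamma>} \<subseteq> Field r" by (auto simp: rless_def FieldI2)
  then show ?thesis
    using wo_rel.minim_in[of r "{\<gamma>\<in>S. rless r \<alpha> \<gamma>}"] assms
    unfolding next_above_def wo_rel_def by auto
qed

lemma rless_next_above_cong:
  assumes r: "Well_order r"
    and next_eq: "next_above r S \<alpha> = next_above r S \<alpha>'" and "\<alpha>' \<notin> S"
    and \<beta>: "\<beta> \<in> S" "rless r \<alpha> \<beta>"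
  shows "rless r \<alpha>' \<beta>"
proof -
  let ?S = "{\<gamma>\<in>S. rless r \<alpha> \<gamma>}" and ?S' = "{\<gamma>\<in>S. rless r \<alpha>' \<gamma>}"
  have wo: "wo_rel r" using r by (simp add: wo_rel_def)
  have field: "?S \<subseteq> Field r" "?S' \<subseteq> Field r" by (auto simp: rless_def FieldI2)
  have "\<beta> \<in> ?S" using \<beta> by blast
  then have "next_above r S \<alpha> = Some (wo_rel.minim r ?S)" and min_le: "(wo_rel.minim r ?S, \<beta>) \<in> r"
    using wo_rel.minim_least[OF wo field(1)] unfolding next_above_def by auto
  then have "?S' \<noteq> {}" and min_eq: "wo_rel.minim r ?S' = wo_rel.minim r ?S"
    using next_eq unfolding next_above_def by (auto split: if_splits)
  then have "(\<alpha>', wo_rel.minim r ?S) \<in> r"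
    using wo_rel.minim_in[OF wo field(2)] min_eq unfolding rless_def by auto
  then have "(\<alpha>', \<beta>) \<in> r" using min_le wo_rel.TRANS[OF wo] unfolding trans_def by blast
  then show ?thesis using \<open>\<alpha>' \<notin> S\<close> \<beta>(1) unfolding rless_def by auto
qed

definition cut_code :: "'k rel \<Rightarrow> ('k \<times> rat) set \<Rightarrow> 'k \<times> rat \<Rightarrow> ('k \<times> rat) + 'k option" where
  "cut_code r V x = (if fst x \<in> fst ` V then Inl x else Inr (next_above r (fst ` V) (fst x)))"

definition cut_codes :: "('k \<times> rat) set \<Rightarrow> (('k \<times> rat) + 'k option) set" where
  "cut_codes V = (fst ` V \<times> UNIV) <+> ({None} \<union> Some ` fst ` V)"

lemma cut_code_in_cut_codes:
  assumes "Well_order r"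
  shows "cut_code r V x \<in> cut_codes V"
proof (cases "fst x \<in> fst ` V")
  case True
  then show ?thesis unfolding cut_code_def cut_codes_def by (simp add: InlI mem_Times_iff)
next
  case False
  then show ?thesis using next_above_in[OF assms] unfolding cut_code_def cut_codes_def
    by (simp add: InrI)
qed

lemma lexless_cut_code_cong:
  assumes r: "Well_order r" "Field r = UNIV"
    and code: "cut_code r V x = cut_code r V x'"
    and v: "v \<in> V" "x \<noteq> v" "x' \<noteq> v"
  shows "lexless r x v = lexless r x' v \<and> lexless r v x = lexless r v x'"
proof (cases "fst x \<in> fst ` V")
  case True
  then have "x = x'" using code unfolding cut_code_def by (auto split: if_splits)
  then show ?thesis by simp
next
  case False
  then have x': "fst x' \<notin> fst ` V" and next_eq: "next_above r (fst ` V) (fst x) =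
      next_above r (fst ` V) (fst x')"
    using code unfolding cut_code_def by (auto split: if_splits)
  have fv: "fst v \<in> fst ` V" using v(1) by blast
  have ne: "fst x \<noteq> fst v" "fst x' \<noteq> fst v" using False x' fv by metis+
  have "rless r (fst x) (fst v) = rless r (fst x') (fst v)"
    using rless_next_above_cong[OF r(1) next_eq x' fv]
      rless_next_above_cong[OF r(1) next_eq[symmetric] False fv] by blast
  then show ?thesis
    using rless_iff_not_rless[OF r ne(1)] rless_iff_not_rless[OF r ne(2)] ne
    unfolding lexless_def by auto
qed

lemma I0less_first_difference:
  assumes "\<forall>i<m. f i = g i" and "f m \<noteq> g m"
  shows "I0less r f g = lexless r (f m) (g m)" and "I0less r g f = lexless r (g m) (f m)"
proof -
  have "(LEAST i. f i \<noteq> g i) = m" "(LEAST i. g i \<noteq> f i) = m"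
    by (rule Least_equality, use assms in \<open>auto simp: not_less[symmetric]\<close>)+
  moreover have "f \<noteq> g" using assms(2) by auto
  ultimately show "I0less r f g = lexless r (f m) (g m)" "I0less r g f = lexless r (g m) (f m)"
    unfolding I0less_def by auto
qed

abbreviation values_of :: "(nat \<Rightarrow> 'a) set \<Rightarrow> 'a set" where
  "values_of B \<equiv> \<Union>b\<in>B. range b"

definition prefix_realized :: "(nat \<Rightarrow> 'a) set \<Rightarrow> (nat \<Rightarrow> 'a) \<Rightarrow> nat \<Rightarrow> bool" where
  "prefix_realized B a n \<longleftrightarrow> (\<exists>b\<in>B. \<forall>i<n. a i = b i)"

lemma I0less_cong_at_exit:
  assumes r: "Well_order r" "Field r = UNIV"
    and agree: "\<forall>i<k. a i = a' i"
    and exit: "\<not> prefix_realized B a (Suc k)" "\<not> prefix_realized B a' (Suc k)"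
    and code: "cut_code r (values_of B) (a k) = cut_code r (values_of B) (a' k)"
    and b: "b \<in> B"
  shows "I0less r a b = I0less r a' b \<and> I0less r b a = I0less r b a' \<and> (a = b \<longleftrightarrow> a' = b)"
proof -
  obtain i where i: "i \<le> k" "a i \<noteq> b i"
    using exit(1) b unfolding prefix_realized_def by (auto simp: less_Suc_eq_le)
  define m where "m = (LEAST i. a i \<noteq> b i)"
  have "m \<le> i" unfolding m_def using i(2) by (rule Least_le)
  have am: "a m \<noteq> b m" unfolding m_def using i(2) by (rule LeastI)
  have below: "\<forall>j<m. a j = b j" unfolding m_def using not_less_Least by blast
  have neq: "a \<noteq> b" "a' \<noteq> b"
    using exit b unfolding prefix_realized_def by auto
  show ?thesis
  proof (cases "m < k")
    case True
    then have below': "\<forall>j<m. a' j = b j" and "a' m = a m" using agree below by auto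
    then have a'm: "a' m \<noteq> b m" using am by simp
    show ?thesis
      using I0less_first_difference[OF below am] I0less_first_difference[OF below' a'm]
        \<open>a' m = a m\<close> neq by simp
  next
    case False
    then have "m = k" using \<open>m \<le> i\<close> i(1) by simp
    then have below_k: "\<forall>j<k. a j = b j" and below_k': "\<forall>j<k. a' j = b j" and ak: "a k \<noteq> b k"
      using agree below am by auto
    have a'k: "a' k \<noteq> b k"
    proof
      assume "a' k = b k"
      then have "\<forall>j<Suc k. a' j = b j" using below_k' less_Suc_eq by auto
      then show False using exit(2) b unfolding prefix_realized_def by blast
    qed
    have "b k \<in> values_of B" using b by blast
    with lexless_cut_code_cong[OF r code _ ak a'k] show ?thesis
      using I0less_first_difference[OF below_k ak] I0less_first_difference[OF below_k' a'k] neq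
      by simp
  qed
qed

definition type_code ::
    "'k rel \<Rightarrow> (nat \<Rightarrow> 'k \<times> rat) set \<Rightarrow> (nat \<Rightarrow> 'k \<times> rat) \<Rightarrow>
      (nat \<Rightarrow> 'k \<times> rat) + ('k \<times> rat) list \<times> (('k \<times> rat) + 'k option)" where
  "type_code r B a =
     (if \<forall>n. prefix_realized B a n then Inl a
      else let k = LEAST k. \<not> prefix_realized B a (Suc k)
           in Inr (map a [0..<k], cut_code r (values_of B) (a k)))"

lemma prefix_realized_exit:
  assumes "\<not> (\<forall>n. prefix_realized B a n)"
  shows "\<not> prefix_realized B a (Suc (LEAST k. \<not> prefix_realized B a (Suc k)))"
proof (rule LeastI_ex)
  obtain n where "\<not> prefix_realized B a n" using assms by blast
  then show "\<exists>k. \<not> prefix_realized B a (Suc k)"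
    unfolding prefix_realized_def by (intro exI[of _ n]) (blast intro: less_SucI)
qed

lemma tp_bs_I0less_eq_if_type_code_eq:
  assumes r: "Well_order r" "Field r = UNIV" and code: "type_code r B a = type_code r B a'"
  shows "tp_bs (I0less r) a B = tp_bs (I0less r) a' B"
proof (cases "\<forall>n. prefix_realized B a n")
  case True
  then have "a = a'" using code unfolding type_code_def by (auto simp: Let_def split: if_splits)
  then show ?thesis by simp
next
  case False
  then have False': "\<not> (\<forall>n. prefix_realized B a' n)"
    using code unfolding type_code_def by (auto simp: Let_def split: if_splits)
  define k where "k = (LEAST k. \<not> prefix_realized B a (Suc k))"
  define k' where "k' = (LEAST k. \<not> prefix_realized B a' (Suc k))"
  have lists: "map a [0..<k] = map a' [0..<k']"
    and cuts: "cut_code r (values_of B) (a k) = cut_code r (values_of B) (a' k')"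
    using code False False' unfolding type_code_def k_def k'_def by (simp_all add: Let_def)
  have "k' = k" using arg_cong[OF lists, of length] by simp
  then have agree: "\<forall>i<k. a i = a' i" using lists by (simp add: map_eq_conv)
  have exit: "\<not> prefix_realized B a (Suc k)" "\<not> prefix_realized B a' (Suc k)"
    using prefix_realized_exit[OF False] prefix_realized_exit[OF False'] \<open>k' = k\<close>
    unfolding k_def k'_def by simp_all
  show ?thesis
  proof (rule tp_bs_eqI)
    show "I0less r a a = I0less r a' a'" by (simp add: I0less_def)
  qed (use I0less_cong_at_exit[OF r agree exit] cuts \<open>k' = k\<close> in simp)
qed

text \<open>The summand \<open>{[]}\<close> only matters for \<open>B = {}\<close>.\<close>

definition finite_prefixes :: "(nat \<Rightarrow> 'a) set \<Rightarrow> 'a list set" where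
  "finite_prefixes B = {[]} \<union> (\<lambda>(b, k). map b [0..<k]) ` (B \<times> UNIV)"

lemma range_type_code_subset:
  assumes "Well_order r"
  shows "range (type_code r B) \<subseteq>
    {f. \<forall>n :: nat. f n \<in> values_of B} <+> (finite_prefixes B \<times> cut_codes (values_of B))"
proof (rule image_subsetI)
  fix a
  show "type_code r B a \<in> {f. \<forall>n :: nat. f n \<in> values_of B} <+> (finite_prefixes B \<times> cut_codes (values_of B))"
  proof (cases "\<forall>n. prefix_realized B a n")
    case True
    have "a n \<in> values_of B" for n
      using True[rule_format, of "Suc n"] unfolding prefix_realized_def by blast
    then show ?thesis using True unfolding type_code_def by auto
  next
    case False
    define k where "k = (LEAST k. \<not> prefix_realized B a (Suc k))"
    have "map a [0..<k] \<in> finite_prefixes B"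
    proof (cases "prefix_realized B a k")
      case True
      then obtain b where "b \<in> B" "\<forall>i<k. a i = b i" unfolding prefix_realized_def by blast
      then have "map a [0..<k] = (\<lambda>(b, k). map b [0..<k]) (b, k)" by simp
      then show ?thesis using \<open>b \<in> B\<close> unfolding finite_prefixes_def by blast
    next
      case False
      have "prefix_realized B a (Suc j)" if "j < k" for j
        using not_less_Least[of j "\<lambda>k. \<not> prefix_realized B a (Suc k)"] that
        unfolding k_def by blast
      then have "k = 0" using False by (cases k) auto
      then show ?thesis unfolding finite_prefixes_def by simp
    qed
    moreover have "type_code r B a = Inr (map a [0..<k], cut_code r (values_of B) (a k))"
      using False unfolding type_code_def k_def by (simp add: Let_def)
    moreover have "cut_code r (values_of B) (a k) \<in> cut_codes (values_of B)"
      by (rule cut_code_in_cut_codes[OF assms])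
    ultimately show ?thesis by auto
  qed
qed

lemma natLeq_ordLess_infinite_Field:
  assumes "Card_order r" and "natLeq <o r"
  shows "\<not> finite (Field r)"
proof -
  have "|UNIV :: nat set| <o r" by (rule countable_card_of_ordLess[OF _ assms(2)]) simp
  then have "|UNIV :: nat set| \<le>o |Field r|"
    using ordLess_ordIso_trans ordIso_symmetric[OF card_of_Field_ordIso[OF assms(1)]]
      ordLess_imp_ordLeq by blast
  then show ?thesis using card_of_ordLeq_finite infinite_UNIV_nat by blast
qed

lemma card_of_values_of_ordLess:
  assumes r: "Card_order r" "natLeq <o r" and B: "|B| <o r"
  shows "|values_of B| <o r" and "|finite_prefixes B| <o r"
proof -
  have inf: "\<not> finite (Field r)" using natLeq_ordLess_infinite_Field[OF r] .
  have nat: "|UNIV :: nat set| <o r" by (rule countable_card_of_ordLess[OF _ r(2)]) simp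
  have BN: "|B \<times> (UNIV :: nat set)| <o r"
    using card_of_Times_ordLess_infinite_Field[OF r(1) inf B nat] .
  have "values_of B = (\<lambda>(b, n). b n) ` (B \<times> UNIV)" by force
  then show "|values_of B| <o r" by (simp only:) (rule card_of_image_ordLess[OF BN])
  show "|finite_prefixes B| <o r" unfolding finite_prefixes_def
    by (rule card_of_Un_ordLess_infinite_Field[OF inf r(1)
        finite_ordLess_infinite_Card_order[OF r(1) inf] card_of_image_ordLess[OF BN]]) simp
qed

lemma card_of_cut_codes_ordLess:
  assumes r: "Card_order r" "natLeq <o r" and V: "|V| <o r"
  shows "|cut_codes V| <o r"
proof -
  have inf: "\<not> finite (Field r)" using natLeq_ordLess_infinite_Field[OF r] .
  have rat: "|UNIV :: rat set| <o r" by (rule countable_card_of_ordLess[OF _ r(2)]) simp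
  show ?thesis unfolding cut_codes_def
    by (rule card_of_Plus_ordLess_infinite_Field[OF inf r(1)
        card_of_Times_ordLess_infinite_Field[OF r(1) inf card_of_image_ordLess[OF V] rat]
        card_of_Un_ordLess_infinite_Field[OF inf r(1) finite_ordLess_infinite_Card_order[OF r(1) inf]
          card_of_image_ordLess[OF card_of_image_ordLess[OF V]]]]) simp
qed

lemma card_of_range_type_code_ordLess:
  fixes r :: "'k rel"
  assumes r: "Card_order r" "Field r = UNIV" and uncountable: "natLeq <o r"
    and omega_power: "\<forall>A :: 'k set. |A| <o r \<longrightarrow> |Func (UNIV :: nat set) A| <o r"
    and B: "|B| <o r"
  shows "|range (type_code r B)| <o r"
proof -
  have inf: "\<not> finite (Field r)" using natLeq_ordLess_infinite_Field[OF r(1) uncountable] .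
  note V = card_of_values_of_ordLess[OF r(1) uncountable B]
  have "|{f. \<forall>n :: nat. f n \<in> values_of B} <+> (finite_prefixes B \<times> cut_codes (values_of B))| <o r"
    by (intro card_of_Plus_ordLess_infinite_Field[OF inf r(1)]
        card_of_sequences_ordLess[OF r omega_power V(1)]
        card_of_Times_ordLess_infinite_Field[OF r(1) inf V(2)]
        card_of_cut_codes_ordLess[OF r(1) uncountable V(1)])
  then show ?thesis
    using range_type_code_subset[OF card_order_on_well_order_on[OF r(1)]]
    by (rule card_of_subset_ordLess)
qed

theorem mainTheorem14:
  fixes kappa :: "'k rel"
  assumes card: "Card_order kappa" and field: "Field kappa = UNIV"
    and uncountable: "natLeq <o kappa"
    and regular: "regularCard kappa"
    and less_kappa_power: "\<forall>A :: 'k set. |A| <o kappa \<longrightarrow> |Func A (UNIV :: 'k set)| \<le>o kappa"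
    and omega_power: "\<forall>A :: 'k set. |A| <o kappa \<longrightarrow> |Func (UNIV :: nat set) A| <o kappa"
    and successor: "\<exists>L :: 'k set. kappa =o cardSuc |L|"
  shows "lt_bs_stable kappa (I0 kappa) (I0less kappa)"
  unfolding lt_bs_stable_def
proof (intro allI impI)
  fix B assume "B \<subseteq> I0 kappa \<and> |B| <o kappa"
  then have codes: "|range (type_code kappa B)| <o kappa"
    using card_of_range_type_code_ordLess[OF card field uncountable omega_power] by blast
  have "|range (\<lambda>a. tp_bs (I0less kappa) a B)| \<le>o |range (type_code kappa B)|"
    by (rule card_of_image_ordLeq_factor,
        rule tp_bs_I0less_eq_if_type_code_eq[OF card_order_on_well_order_on[OF card] field])
  then have "|range (\<lambda>a. tp_bs (I0less kappa) a B)| <o kappa"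
    using codes by (rule ordLeq_ordLess_trans)
  moreover have "{tp_bs (I0less kappa) a B |a. a \<in> I0 kappa} \<subseteq> range (\<lambda>a. tp_bs (I0less kappa) a B)"
    by blast
  ultimately show "|{tp_bs (I0less kappa) a B |a. a \<in> I0 kappa}| <o kappa"
    by (rule card_of_subset_ordLess)
qed

end
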